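(* Let $G=(V,E)$ be the path (chain) graph with $V=\{1,\dots,n\}$, $n\ge 2$, and $E=\{\{i,i+1\}: i=1,\dots,n-1\}$. Let $c\in\mathbb{R}^n$ have strictly positive components and $\rho>0$. For $k=1,\dots,n$ define $s_k=\sum_{1\le i\le k,\ i\equiv k \pmod 2}c_i^2$ (so $s_1=c_1^2$, $s_2=c_2^2$, $s_3=c_1^2+c_3^2$, $s_4=c_2^2+c_4^2$, ...). Then there exist strictly positive edge weights such that the weighted adjacency matrix $A$ satisfies $Ac=\rho c$ if and only if $$s_1<s_2<\dots<s_{n-1}\quad\text{and}\quad s_{n-1}=s_n,$$ i.e. $c_1^2<c_2^2<c_1^2+c_3^2<c_2^2+c_4^2<\dots<\sum_{i \text{ odd}}c_i^2=\sum_{i\text{ even}}c_i^2$.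
   Context: For positive edge weights $w_{ij}=w_{ji}$ ($\{i,j\}\in E$), the weighted adjacency matrix $A$ has $a_{ij}=w_{ij}$ if $\{i,j\}\in E$ and $a_{ij}=0$ otherwise. *)

theory Defs
  imports Complex_Main
begin

definition path_adj :: "nat \<Rightarrow> (nat \<Rightarrow> real) \<Rightarrow> nat \<Rightarrow> nat \<Rightarrow> real" where
  "path_adj n w i j =
     (if 1 \<le> i \<and> i < n \<and> j = i + 1 then w i
      else if 1 \<le> j \<and> j < n \<and> i = j + 1 then w j
      else 0)"

definition alt_sq_sum :: "(nat \<Rightarrow> real) \<Rightarrow> nat \<Rightarrow> real" where
  "alt_sq_sum c k = (\<Sum>i\<in>{i. 1 \<le> i \<and> i \<le> k \<and> i mod 2 = k mod 2}. (c i)^2)"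

end

theory Submission
  imports Defs
begin

text \<open>Multiply the i-th eigen-equation by c(i). With the edge flows f(i) = w(i) c(i) c(i+1)
  on the edges and f(0) = f(n) = 0, it becomes the balance law f(i) + f(i-1) = \<rho> c(i)^2.
  Since c(i)^2 = s(i) - s(i-2), the sequence g(i) = \<rho> (s(i) - s(i-1)) obeys the same law, and
  g(0) = 0; a sequence is determined by its initial value and its consecutive sums. So the
  eigen-equations say exactly that f(i) = g(i) on every edge and g(n) = 0, i.e. s(n-1) = s(n),
  and the weights so determined are positive iff the s(i) increase strictly.\<close>

lemma consecutive_sums_eq_iff:
  fixes f g :: "nat \<Rightarrow> 'a::ab_group_add"
  assumes "f 0 = g 0"
  shows "(\<forall>i. 1 \<le> i \<and> i \<le> n \<longrightarrow> f i + f (i - 1) = g i + g (i - 1)) \<longleftrightarrow> (\<forall>i \<le> n. f i = g i)"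
proof (induction n)
  case 0
  then show ?case using assms by auto
next
  case (Suc n)
  have "f (Suc n) + f n = g (Suc n) + g n \<longleftrightarrow> f (Suc n) = g (Suc n)" if "f n = g n"
    using that by simp
  then show ?case using Suc by (auto simp: le_Suc_eq)
qed

lemma ex_pos_solution_iff:
  fixes a b :: "'i \<Rightarrow> real"
  assumes "\<And>i. P i \<Longrightarrow> a i > 0"
  shows "(\<exists>w. (\<forall>i. P i \<longrightarrow> w i > 0) \<and> (\<forall>i. P i \<longrightarrow> w i * a i = b i)) \<longleftrightarrow> (\<forall>i. P i \<longrightarrow> b i > 0)"
proof
  assume "\<exists>w. (\<forall>i. P i \<longrightarrow> w i > 0) \<and> (\<forall>i. P i \<longrightarrow> w i * a i = b i)"
  then obtain w where "\<forall>i. P i \<longrightarrow> w i > 0" "\<forall>i. P i \<longrightarrow> w i * a i = b i" by blast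
  with assms show "\<forall>i. P i \<longrightarrow> b i > 0" by (metis mult_pos_pos)
next
  assume "\<forall>i. P i \<longrightarrow> b i > 0"
  then have "(\<forall>i. P i \<longrightarrow> b i / a i > 0) \<and> (\<forall>i. P i \<longrightarrow> b i / a i * a i = b i)"
    using assms by (simp add: order_less_imp_not_eq2)
  then show "\<exists>w. (\<forall>i. P i \<longrightarrow> w i > 0) \<and> (\<forall>i. P i \<longrightarrow> w i * a i = b i)"
    by (rule exI[where x = "\<lambda>i. b i / a i"])
qed

lemma alt_sq_sum_0 [simp]: "alt_sq_sum c 0 = 0"
proof -
  have "{i::nat. 1 \<le> i \<and> i \<le> 0 \<and> i mod 2 = 0 mod 2} = {}" by auto
  then show ?thesis unfolding alt_sq_sum_def by (simp only: sum.empty)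
qed

lemma alt_sq_sum_1 [simp]: "alt_sq_sum c (Suc 0) = (c 1)^2"
proof -
  have "{i::nat. 1 \<le> i \<and> i \<le> 1 \<and> i mod 2 = 1 mod 2} = {1}" by auto
  then show ?thesis unfolding alt_sq_sum_def by simp
qed

lemma alt_sq_sum_add_2: "alt_sq_sum c (k + 2) = alt_sq_sum c k + (c (k + 2))^2"
proof -
  have "{i. 1 \<le> i \<and> i \<le> k + 2 \<and> i mod 2 = (k + 2) mod 2} =
        insert (k + 2) {i. 1 \<le> i \<and> i \<le> k \<and> i mod 2 = k mod 2}"
    by auto presburger+
  then show ?thesis unfolding alt_sq_sum_def by simp
qed

lemma alt_sq_sum_rec:
  assumes "1 \<le> k"
  shows "alt_sq_sum c k = alt_sq_sum c (k - 2) + (c k)^2"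
proof (cases "k = 1")
  case True
  show ?thesis unfolding True by simp
next
  case False
  with assms have "k = (k - 2) + 2" by simp
  then show ?thesis by (metis alt_sq_sum_add_2)
qed

lemma alt_sq_sum_strict_increasing_iff:
  assumes "c 1 \<noteq> 0"
  shows "(\<forall>k. 1 \<le> k \<and> k < n - 1 \<longrightarrow> alt_sq_sum c k < alt_sq_sum c (k + 1)) \<longleftrightarrow>
         (\<forall>i. 1 \<le> i \<and> i < n \<longrightarrow> alt_sq_sum c (i - 1) < alt_sq_sum c i)"
proof (intro iffI allI impI)
  fix i assume inc: "\<forall>k. 1 \<le> k \<and> k < n - 1 \<longrightarrow> alt_sq_sum c k < alt_sq_sum c (k + 1)"
    and i: "1 \<le> i \<and> i < n"
  show "alt_sq_sum c (i - 1) < alt_sq_sum c i"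
  proof (cases "i = 1")
    case True
    show ?thesis unfolding True using assms by simp
  next
    case False
    with i have "1 \<le> i - 1 \<and> i - 1 < n - 1" by auto
    with inc have "alt_sq_sum c (i - 1) < alt_sq_sum c (i - 1 + 1)" by blast
    with i show ?thesis by simp
  qed
next
  fix k assume "\<forall>i. 1 \<le> i \<and> i < n \<longrightarrow> alt_sq_sum c (i - 1) < alt_sq_sum c i"
    and "1 \<le> k \<and> k < n - 1"
  then show "alt_sq_sum c k < alt_sq_sum c (k + 1)" by (metis add_diff_cancel_right' less_diff_conv le_add2)
qed

lemma path_adj_row_sum:
  assumes "1 \<le> i" "i \<le> n"
  shows "(\<Sum>j = 1..n. path_adj n w i j * c j) =
    (if i < n then w i * c (i + 1) else 0) + (if 2 \<le> i then w (i - 1) * c (i - 1) else 0)"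
proof -
  have "(\<Sum>j = 1..n. path_adj n w i j * c j) =
     (\<Sum>j = 1..n. if j = i + 1 then (if i < n then w i * c (i + 1) else 0) else 0) +
     (\<Sum>j = 1..n. if j = i - 1 then (if 2 \<le> i then w (i - 1) * c (i - 1) else 0) else 0)"
    unfolding sum.distrib[symmetric] using assms
    by (intro sum.cong) (auto simp: path_adj_def)
  also have "(\<Sum>j = 1..n. if j = i + 1 then (if i < n then w i * c (i + 1) else 0) else 0) =
      (if i < n then w i * c (i + 1) else 0)"
    by (cases "i < n") (simp_all add: sum.delta')
  also have "(\<Sum>j = 1..n. if j = i - 1 then (if 2 \<le> i then w (i - 1) * c (i - 1) else 0) else 0) =
      (if 2 \<le> i then w (i - 1) * c (i - 1) else 0)"
  proof (cases "2 \<le> i")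
    case True
    with assms have "i - 1 \<in> {1..n}" by auto
    with True show ?thesis by (simp add: sum.delta')
  qed simp
  finally show ?thesis .
qed

definition path_flow :: "nat \<Rightarrow> (nat \<Rightarrow> real) \<Rightarrow> (nat \<Rightarrow> real) \<Rightarrow> nat \<Rightarrow> real" where
  "path_flow n w c i = (if 1 \<le> i \<and> i < n then w i * c i * c (i + 1) else 0)"

lemma path_adj_row_sum_scaled:
  assumes "1 \<le> i" "i \<le> n"
  shows "c i * (\<Sum>j = 1..n. path_adj n w i j * c j) = path_flow n w c i + path_flow n w c (i - 1)"
  unfolding path_adj_row_sum[OF assms] using assms by (auto simp: path_flow_def algebra_simps)

lemma path_eigen_equations_iff:
  fixes c w :: "nat \<Rightarrow> real"
  assumes c: "\<And>i. 1 \<le> i \<Longrightarrow> i \<le> n \<Longrightarrow> c i \<noteq> 0" and "\<rho> \<noteq> 0" and "1 \<le> n"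
  shows "(\<forall>i. 1 \<le> i \<and> i \<le> n \<longrightarrow> (\<Sum>j = 1..n. path_adj n w i j * c j) = \<rho> * c i) \<longleftrightarrow>
    (\<forall>i. 1 \<le> i \<and> i < n \<longrightarrow> w i * (c i * c (i + 1)) = \<rho> * (alt_sq_sum c i - alt_sq_sum c (i - 1)))
    \<and> alt_sq_sum c (n - 1) = alt_sq_sum c n"
proof -
  let ?s = "alt_sq_sum c" and ?f = "path_flow n w c"
  define g where "g i = \<rho> * (?s i - ?s (i - 1))" for i
  have row_iff: "(\<Sum>j = 1..n. path_adj n w i j * c j) = \<rho> * c i \<longleftrightarrow> ?f i + ?f (i - 1) = g i + g (i - 1)"
    if "1 \<le> i" "i \<le> n" for i
  proof -
    have "g i + g (i - 1) = \<rho> * (?s i - ?s (i - 2))"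
      by (simp add: g_def algebra_simps diff_diff_left numeral_2_eq_2)
    also have "\<dots> = \<rho> * (c i)^2"
      using alt_sq_sum_rec[OF \<open>1 \<le> i\<close>, of c] by simp
    finally have g_sum: "g i + g (i - 1) = \<rho> * (c i)^2" .
    have "(\<Sum>j = 1..n. path_adj n w i j * c j) = \<rho> * c i \<longleftrightarrow>
        c i * (\<Sum>j = 1..n. path_adj n w i j * c j) = c i * (\<rho> * c i)"
      using c[OF that] by simp
    also have "\<dots> \<longleftrightarrow> ?f i + ?f (i - 1) = g i + g (i - 1)"
      unfolding path_adj_row_sum_scaled[OF that] g_sum by (simp add: power2_eq_square mult_ac)
    finally show ?thesis .
  qed
  have "(\<forall>i. 1 \<le> i \<and> i \<le> n \<longrightarrow> (\<Sum>j = 1..n. path_adj n w i j * c j) = \<rho> * c i) \<longleftrightarrow>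
      (\<forall>i. 1 \<le> i \<and> i \<le> n \<longrightarrow> ?f i + ?f (i - 1) = g i + g (i - 1))"
    using row_iff by blast
  also have "\<dots> \<longleftrightarrow> (\<forall>i \<le> n. ?f i = g i)"
    by (rule consecutive_sums_eq_iff) (simp add: path_flow_def g_def)
  also have "\<dots> \<longleftrightarrow> (\<forall>i. 1 \<le> i \<and> i < n \<longrightarrow> ?f i = g i) \<and> ?f n = g n"
  proof -
    have "?f 0 = g 0" by (simp add: path_flow_def g_def)
    moreover have "i = 0 \<or> 1 \<le> i \<and> i < n \<or> i = n" if "i \<le> n" for i
      using that by linarith
    ultimately show ?thesis using \<open>1 \<le> n\<close> by auto
  qed
  also have "\<dots> \<longleftrightarrow> (\<forall>i. 1 \<le> i \<and> i < n \<longrightarrow> w i * (c i * c (i + 1)) = g i) \<and> ?s (n - 1) = ?s n"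
    using \<open>\<rho> \<noteq> 0\<close> by (auto simp: path_flow_def g_def mult.assoc)
  finally show ?thesis by (simp add: g_def)
qed

theorem mainTheorem5:
  fixes n :: nat and c :: "nat \<Rightarrow> real" and \<rho> :: real
  assumes "n \<ge> 2"
    and "\<And>i. 1 \<le> i \<Longrightarrow> i \<le> n \<Longrightarrow> c i > 0"
    and "\<rho> > 0"
  shows "(\<exists>w :: nat \<Rightarrow> real. (\<forall>i. 1 \<le> i \<and> i < n \<longrightarrow> w i > 0) \<and>
            (\<forall>i. 1 \<le> i \<and> i \<le> n \<longrightarrow>
               (\<Sum>j = 1..n. path_adj n w i j * c j) = \<rho> * c i))
         \<longleftrightarrow> ((\<forall>k. 1 \<le> k \<and> k < n - 1 \<longrightarrow> alt_sq_sum c k < alt_sq_sum c (k + 1))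
              \<and> alt_sq_sum c (n - 1) = alt_sq_sum c n)"
proof -
  let ?s = "alt_sq_sum c"
  have eigen_iff: "(\<forall>i. 1 \<le> i \<and> i \<le> n \<longrightarrow> (\<Sum>j = 1..n. path_adj n w i j * c j) = \<rho> * c i) \<longleftrightarrow>
      (\<forall>i. 1 \<le> i \<and> i < n \<longrightarrow> w i * (c i * c (i + 1)) = \<rho> * (?s i - ?s (i - 1)))
      \<and> ?s (n - 1) = ?s n" for w
    using path_eigen_equations_iff[where n = n and c = c and \<rho> = \<rho> and w = w] assms by fastforce
  have "(\<exists>w. (\<forall>i. 1 \<le> i \<and> i < n \<longrightarrow> w i > 0) \<and>
          (\<forall>i. 1 \<le> i \<and> i \<le> n \<longrightarrow> (\<Sum>j = 1..n. path_adj n w i j * c j) = \<rho> * c i))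
     \<longleftrightarrow> (\<exists>w. (\<forall>i. 1 \<le> i \<and> i < n \<longrightarrow> w i > 0) \<and>
          (\<forall>i. 1 \<le> i \<and> i < n \<longrightarrow> w i * (c i * c (i + 1)) = \<rho> * (?s i - ?s (i - 1))))
        \<and> ?s (n - 1) = ?s n"
    unfolding eigen_iff by blast
  also have "\<dots> \<longleftrightarrow> (\<forall>i. 1 \<le> i \<and> i < n \<longrightarrow> \<rho> * (?s i - ?s (i - 1)) > 0) \<and> ?s (n - 1) = ?s n"
    using ex_pos_solution_iff[where P = "\<lambda>i. 1 \<le> i \<and> i < n" and a = "\<lambda>i. c i * c (i + 1)"
        and b = "\<lambda>i. \<rho> * (?s i - ?s (i - 1))"] assms(2) by simp
  also have "\<dots> \<longleftrightarrow> (\<forall>i. 1 \<le> i \<and> i < n \<longrightarrow> ?s (i - 1) < ?s i) \<and> ?s (n - 1) = ?s n"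
    using \<open>\<rho> > 0\<close> by (simp add: zero_less_mult_iff)
  also have "\<dots> \<longleftrightarrow> (\<forall>k. 1 \<le> k \<and> k < n - 1 \<longrightarrow> ?s k < ?s (k + 1)) \<and> ?s (n - 1) = ?s n"
    using alt_sq_sum_strict_increasing_iff[of c n] assms(1) assms(2)[of 1] by simp
  finally show ?thesis .
qed

end
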